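(* Let $X$ be a (real or complex) separable infinite-dimensional F-space and $T:X\to X$ a continuous linear operator that is quasi-rigid. Then the set $\mathrm{Rec}(T)$ of recurrent vectors of $T$ contains a dense infinite-dimensional vector subspace of $X$.
   Context: An F-space is a completely metrizable topological vector space. $x$ is recurrent for $T$ if $x\in\overline{\{T^nx:n\geq1\}}$; $\mathrm{Rec}(T)$ is the set of such $x$. $T$ is quasi-rigid if there exist a strictly increasing sequence $(n_k)$ of positive integers and a dense $Y\subset X$ with $T^{n_k}x\to x$ for every $x\in Y$. *)

theory Defs
  imports "HOL-Analysis.Analysis"
begin

text \<open>An F-space over the scalar field 'k (in the paper: the reals or the complex numbers):
  a vector space (with scalar multiplication smult_op) whose topology makes addition and
  scalar multiplication jointly continuous and is completely metrizable.\<close>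
definition F_space :: "('k::real_normed_field \<Rightarrow> 'a::{ab_group_add,topological_space} \<Rightarrow> 'a) \<Rightarrow> bool" where
  "F_space smult_op \<longleftrightarrow>
     vector_space smult_op \<and>
     continuous_on UNIV (\<lambda>(x::'a, y::'a). x + y) \<and>
     continuous_on UNIV (\<lambda>(c::'k, x::'a). smult_op c x) \<and>
     completely_metrizable_space (euclidean :: 'a topology)"

definition Rec :: "('a::topological_space \<Rightarrow> 'a) \<Rightarrow> 'a set" where
  "Rec T = {x. x \<in> closure {(T ^^ n) x | n. n \<ge> 1}}"

definition quasi_rigid :: "('a::topological_space \<Rightarrow> 'a) \<Rightarrow> bool" where
  "quasi_rigid T \<longleftrightarrow>
     (\<exists>(n::nat \<Rightarrow> nat) Y. strict_mono n \<and> (\<forall>k. n k \<ge> 1) \<and> closure Y = UNIV \<and>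
        (\<forall>x\<in>Y. ((\<lambda>k. (T ^^ n k) x) \<longlongrightarrow> x) sequentially))"

end

theory Submission
  imports Defs
begin

text \<open>
  For the sequence n of quasi-rigidity, the vectors x with \<open>(T ^^ n k) x \<longlonglongrightarrow> x\<close>
  form a subspace (T is linear and the vector operations are continuous); it contains the dense
  set of the definition, so it is dense, and all its vectors are recurrent. It cannot be
  finite-dimensional: finite-dimensional subspaces of a Hausdorff topological vector space over
  \<open>\<real>\<close> or \<open>\<complex>\<close> are closed, so a dense one would be the whole space.

  Closedness uses the Bolzano-Weierstrass property of the scalars. As the scalar field is an
  arbitrary real normed field, this needs Mazur's theorem that such a field is \<open>\<real>\<close> or \<open>\<complex>\<close>.
  Its core is that for every scalar a the map \<open>z \<mapsto> \<parallel>(a - z)(a - z\<^sup>*)\<parallel>\<close> on \<open>\<complex>\<close> has a zero: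
  it attains its minimum, and if the minimum were positive, a root-of-unity doubling argument in
  the complexification of the field would show that the set of minimisers is open, hence all of
  \<open>\<complex>\<close>, contradicting coercivity.
\<close>

section \<open>Complexification of a real normed field\<close>

datatype 'a cplx = Cplx (cre: 'a) (cim: 'a)

instantiation cplx :: (comm_ring_1) comm_ring_1
begin
definition "0 = Cplx 0 0"
definition "1 = Cplx 1 0"
definition "u + v = Cplx (cre u + cre v) (cim u + cim v)"
definition "u - v = Cplx (cre u - cre v) (cim u - cim v)"
definition "- u = Cplx (- cre u) (- cim u)"
definition "u * v = Cplx (cre u * cre v - cim u * cim v) (cre u * cim v + cim u * cre v)"
instance
  by standard (auto simp: zero_cplx_def one_cplx_def plus_cplx_def minus_cplx_def uminus_cplx_def
      times_cplx_def algebra_simps intro: cplx.expand)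
end

lemma cplx_simps [simp]:
  "cre 0 = 0" "cim 0 = 0" "cre 1 = 1" "cim 1 = 0"
  "cre (u + v) = cre u + cre v" "cim (u + v) = cim u + cim v"
  "cre (u - v) = cre u - cre v" "cim (u - v) = cim u - cim v"
  "cre (- u) = - cre u" "cim (- u) = - cim u"
  "cre (u * v) = cre u * cre v - cim u * cim v" "cim (u * v) = cre u * cim v + cim u * cre v"
  by (simp_all add: zero_cplx_def one_cplx_def plus_cplx_def minus_cplx_def uminus_cplx_def
      times_cplx_def)

definition cplx_of :: "complex \<Rightarrow> 'k::real_normed_field cplx" where
  "cplx_of z = Cplx (of_real (Re z)) (of_real (Im z))"

definition cplx_cnj :: "'a::comm_ring_1 cplx \<Rightarrow> 'a cplx" where
  "cplx_cnj u = Cplx (cre u) (- cim u)"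

definition cplx_norm :: "'k::real_normed_field cplx \<Rightarrow> real" where
  "cplx_norm u = norm (cre u) + norm (cim u)"

lemma cplx_of_simps [simp]: "cre (cplx_of z) = of_real (Re z)" "cim (cplx_of z) = of_real (Im z)"
  by (simp_all add: cplx_of_def)

lemma cplx_cnj_simps [simp]: "cre (cplx_cnj u) = cre u" "cim (cplx_cnj u) = - cim u"
  by (simp_all add: cplx_cnj_def)

lemma cplx_of_mult: "cplx_of (z * w) = (cplx_of z * cplx_of w :: 'k::real_normed_field cplx)"
  by (rule cplx.expand) (simp add: algebra_simps)

lemma cplx_of_add: "cplx_of (z + w) = (cplx_of z + cplx_of w :: 'k::real_normed_field cplx)"
  by (rule cplx.expand) (simp add: algebra_simps)

lemma cplx_of_minus: "cplx_of (- z) = (- cplx_of z :: 'k::real_normed_field cplx)"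
  by (rule cplx.expand) simp

lemma cplx_of_power: "cplx_of (z ^ n) = (cplx_of z ^ n :: 'k::real_normed_field cplx)"
proof (induction n)
  case 0
  show ?case by (rule cplx.expand) simp
qed (simp add: cplx_of_mult)

lemma cplx_cnj_mult: "cplx_cnj (u * v) = cplx_cnj u * cplx_cnj v"
  by (rule cplx.expand) (simp add: algebra_simps)

lemma cplx_cnj_diff: "cplx_cnj (u - v) = cplx_cnj u - cplx_cnj v"
  by (rule cplx.expand) simp

lemma cplx_cnj_power: "cplx_cnj (u ^ n) = cplx_cnj u ^ n"
proof (induction n)
  case 0
  show ?case by (rule cplx.expand) simp
qed (simp add: cplx_cnj_mult)

lemma cplx_cnj_cplx_of: "cplx_cnj (cplx_of z) = (cplx_of (cnj z) :: 'k::real_normed_field cplx)"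
  by (rule cplx.expand) simp

lemma cplx_cnj_real: "cplx_cnj (Cplx a 0) = Cplx a 0"
  by (rule cplx.expand) simp

lemma cim_mult_cplx_cnj [simp]: "cim (u * cplx_cnj u) = 0"
  by (simp add: mult.commute)

lemma cre_mult_cplx_cnj_mult:
  "cre (u * v * cplx_cnj (u * v)) = cre (u * cplx_cnj u) * cre (v * cplx_cnj v)"
proof -
  have "u * v * cplx_cnj (u * v) = (u * cplx_cnj u) * (v * cplx_cnj v)"
    by (simp add: cplx_cnj_mult mult_ac)
  then show ?thesis by (simp only: cplx_simps cim_mult_cplx_cnj) simp
qed

lemma cplx_power_real: "Cplx a 0 ^ n = Cplx (a ^ n) 0"
proof (induction n)
  case 0
  show ?case by (simp add: one_cplx_def)
next
  case (Suc n)
  then show ?case by (intro cplx.expand) simp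
qed

lemma cplx_norm_nonneg: "cplx_norm u \<ge> 0"
  by (simp add: cplx_norm_def)

lemma cplx_norm_mult: "cplx_norm (u * v) \<le> cplx_norm u * cplx_norm v"
proof -
  have "norm (cre u * cre v - cim u * cim v) \<le> norm (cre u) * norm (cre v) + norm (cim u) * norm (cim v)"
    by (metis norm_mult norm_triangle_ineq4)
  moreover have "norm (cre u * cim v + cim u * cre v) \<le> norm (cre u) * norm (cim v) + norm (cim u) * norm (cre v)"
    by (metis norm_mult norm_triangle_ineq)
  ultimately show ?thesis by (simp add: cplx_norm_def algebra_simps)
qed

lemma cplx_norm_add: "cplx_norm (u + v) \<le> cplx_norm u + cplx_norm v"
  using norm_triangle_ineq[of "cre u" "cre v"] norm_triangle_ineq[of "cim u" "cim v"]
  by (simp add: cplx_norm_def)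

lemma cplx_norm_diff: "cplx_norm (u - v) \<le> cplx_norm u + cplx_norm v"
  using norm_triangle_ineq4[of "cre u" "cre v"] norm_triangle_ineq4[of "cim u" "cim v"]
  by (simp add: cplx_norm_def)

lemma cplx_norm_power: "cplx_norm (u ^ n) \<le> cplx_norm u ^ n"
proof (induction n)
  case 0
  show ?case by (simp add: cplx_norm_def)
next
  case (Suc n)
  have "cplx_norm (u ^ Suc n) \<le> cplx_norm u * cplx_norm (u ^ n)" by (simp add: cplx_norm_mult)
  also have "\<dots> \<le> cplx_norm u * cplx_norm u ^ n"
    using Suc cplx_norm_nonneg[of u] by (rule mult_left_mono)
  finally show ?case by simp
qed

lemma cplx_norm_cnj [simp]: "cplx_norm (cplx_cnj u) = cplx_norm u"
  by (simp add: cplx_norm_def)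

lemma cplx_norm_cplx_of: "cplx_norm (cplx_of z :: 'k::real_normed_field cplx) \<le> 2 * cmod z"
  using abs_Re_le_cmod[of z] abs_Im_le_cmod[of z] by (simp add: cplx_norm_def)

lemma norm_cre_le_cplx_norm: "norm (cre u) \<le> cplx_norm u"
  by (simp add: cplx_norm_def)

section \<open>Mazur's theorem\<close>

text \<open>\<open>(a - z)(a - z\<^sup>*)\<close>, expanded: a polynomial in a with real coefficients, hence meaningful in \<open>'k\<close>.\<close>

definition conj_quadratic :: "'k::real_normed_field \<Rightarrow> complex \<Rightarrow> 'k" where
  "conj_quadratic a z = a * a - of_real (2 * Re z) * a + of_real ((Re z)\<^sup>2 + (Im z)\<^sup>2)"

lemma conj_quadratic_factor:
  "(Cplx a 0 - cplx_of z) * (Cplx a 0 - cplx_of (cnj z)) = Cplx (conj_quadratic a z) 0"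
  by (rule cplx.expand) (simp add: conj_quadratic_def algebra_simps power2_eq_square)

text \<open>
  In the complexification, \<open>pow_diff a w \<nu> N = (a - w)\<^sup>N - \<nu>\<^sup>N\<close> and \<open>pow_diff_sq\<close> is its squared
  modulus, which lies in \<open>'k\<close>. For \<open>\<zeta>\<^sup>N = -1\<close> the factorisation
  \<open>X\<^sup>2\<^sup>N - \<nu>\<^sup>2\<^sup>N = (X\<^sup>N - \<nu>\<^sup>N)(X\<^sup>N - (\<zeta>\<nu>)\<^sup>N)\<close> gives the doubling identity below.
\<close>

definition pow_diff :: "'k::real_normed_field \<Rightarrow> complex \<Rightarrow> complex \<Rightarrow> nat \<Rightarrow> 'k cplx" where
  "pow_diff a w \<nu> N = (Cplx a 0 - cplx_of w) ^ N - cplx_of (\<nu> ^ N)"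

definition pow_diff_sq :: "'k::real_normed_field \<Rightarrow> complex \<Rightarrow> complex \<Rightarrow> nat \<Rightarrow> 'k" where
  "pow_diff_sq a w \<nu> N = cre (pow_diff a w \<nu> N * cplx_cnj (pow_diff a w \<nu> N))"

lemma pow_diff_sq_1: "pow_diff_sq a w \<nu> 1 = conj_quadratic a (w + \<nu>)"
proof -
  have "pow_diff a w \<nu> 1 = Cplx a 0 - cplx_of (w + \<nu>)"
    by (simp add: pow_diff_def cplx_of_add)
  moreover have "cplx_cnj (Cplx a 0 - cplx_of (w + \<nu>)) = Cplx a 0 - cplx_of (cnj (w + \<nu>))"
    by (simp only: cplx_cnj_diff cplx_cnj_cplx_of cplx_cnj_real)
  ultimately show ?thesis
    by (simp only: pow_diff_sq_def conj_quadratic_factor cplx.sel)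
qed

lemma pow_diff_sq_double:
  assumes "\<zeta> ^ N = -1"
  shows "pow_diff_sq a w \<nu> (2 * N) = pow_diff_sq a w \<nu> N * pow_diff_sq a w (\<zeta> * \<nu>) N"
proof -
  define Y where "Y = Cplx a 0 - cplx_of w"
  have neg: "cplx_of ((\<zeta> * \<nu>) ^ N) = - (cplx_of (\<nu> ^ N) :: 'a cplx)"
    by (simp add: power_mult_distrib assms cplx_of_minus)
  have sq: "Y ^ (2 * N) = (Y ^ N)\<^sup>2" "cplx_of (\<nu> ^ (2 * N)) = cplx_of (\<nu> ^ N) ^ 2"
    by (simp_all add: power_mult[symmetric] mult.commute cplx_of_power[symmetric])
  have "pow_diff a w \<nu> (2 * N) = pow_diff a w \<nu> N * pow_diff a w (\<zeta> * \<nu>) N"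
    unfolding pow_diff_def Y_def[symmetric] sq neg by (simp add: algebra_simps power2_eq_square)
  then show ?thesis
    by (simp only: pow_diff_sq_def cre_mult_cplx_cnj_mult)
qed

lemma norm_pow_diff_sq_lower:
  assumes min: "\<And>z. r \<le> norm (conj_quadratic a z)" and "r \<ge> 0"
  shows "norm (conj_quadratic a (w + \<nu>)) * r ^ (2 ^ m - 1) \<le> norm (pow_diff_sq a w \<nu> (2 ^ m))"
proof (induction m arbitrary: \<nu>)
  case 0
  show ?case using pow_diff_sq_1[of a w \<nu>] by simp
next
  case (Suc m)
  define N :: nat where "N = 2 ^ m"
  have "N \<ge> 1" by (simp add: N_def)
  define \<zeta> where "\<zeta> = cis (pi / real N)"
  have \<zeta>: "\<zeta> ^ N = -1" using \<open>N \<ge> 1\<close> by (simp add: \<zeta>_def Complex.DeMoivre)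
  have "r ^ N = r * r ^ (N - 1)"
    using power_minus_mult[of N r] \<open>N \<ge> 1\<close> by (simp add: mult.commute)
  also have "\<dots> \<le> norm (conj_quadratic a (w + \<zeta> * \<nu>)) * r ^ (N - 1)"
    using min \<open>r \<ge> 0\<close> by (simp add: mult_right_mono)
  also have "\<dots> \<le> norm (pow_diff_sq a w (\<zeta> * \<nu>) N)"
    using Suc.IH by (simp add: N_def)
  finally have IH': "r ^ N \<le> norm (pow_diff_sq a w (\<zeta> * \<nu>) N)" .
  have "2 ^ Suc m - 1 = (N - 1) + N" using \<open>N \<ge> 1\<close> by (simp add: N_def)
  then have "norm (conj_quadratic a (w + \<nu>)) * r ^ (2 ^ Suc m - 1)
      = (norm (conj_quadratic a (w + \<nu>)) * r ^ (N - 1)) * r ^ N"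
    by (simp add: power_add mult_ac)
  also have "\<dots> \<le> norm (pow_diff_sq a w \<nu> N) * norm (pow_diff_sq a w (\<zeta> * \<nu>) N)"
    using Suc.IH[of \<nu>] IH' \<open>r \<ge> 0\<close> by (intro mult_mono) (auto simp: N_def)
  also have "\<dots> = norm (pow_diff_sq a w \<nu> (2 ^ Suc m))"
    using pow_diff_sq_double[OF \<zeta>, of a w \<nu>] by (simp add: N_def norm_mult)
  finally show ?case .
qed

lemma norm_pow_diff_sq_upper:
  fixes a :: "'k::real_normed_field"
  assumes "cplx_norm (Cplx a 0 - cplx_of w) \<le> M"
  shows "norm (pow_diff_sq a w \<mu> N)
    \<le> norm (conj_quadratic a w) ^ N + 4 * (cmod \<mu> * M) ^ N + 4 * ((cmod \<mu>)\<^sup>2) ^ N"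
proof -
  define P :: "'k cplx" where "P = (Cplx a 0 - cplx_of w) ^ N"
  define H :: "'k cplx" where "H = cplx_of (\<mu> ^ N)"
  have "M \<ge> 0" using assms cplx_norm_nonneg order_trans by blast
  have "P * cplx_cnj P = Cplx (conj_quadratic a w ^ N) 0"
    by (simp add: P_def cplx_cnj_power cplx_cnj_diff cplx_cnj_cplx_of cplx_cnj_real
        power_mult_distrib[symmetric] conj_quadratic_factor cplx_power_real)
  then have PP: "cplx_norm (P * cplx_cnj P) = norm (conj_quadratic a w) ^ N"
    by (simp add: cplx_norm_def norm_power)
  have H: "cplx_norm H \<le> 2 * cmod \<mu> ^ N"
    using cplx_norm_cplx_of[of "\<mu> ^ N"] by (simp add: H_def norm_power)
  have P: "cplx_norm P \<le> M ^ N"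
    using cplx_norm_power power_mono[OF assms cplx_norm_nonneg] unfolding P_def by (blast intro: order_trans)
  have "cplx_norm (H * cplx_cnj P) \<le> cplx_norm H * cplx_norm P"
    using cplx_norm_mult[of H "cplx_cnj P"] by simp
  also have "\<dots> \<le> (2 * cmod \<mu> ^ N) * M ^ N"
    using H P by (intro mult_mono) (auto simp: cplx_norm_nonneg)
  finally have HP: "cplx_norm (H * cplx_cnj P) \<le> 2 * (cmod \<mu> * M) ^ N"
    by (simp add: power_mult_distrib)
  have "cplx_norm (P * cplx_cnj H) \<le> cplx_norm P * cplx_norm H"
    using cplx_norm_mult[of P "cplx_cnj H"] by simp
  also have "\<dots> \<le> M ^ N * (2 * cmod \<mu> ^ N)"
    using H P \<open>M \<ge> 0\<close> by (intro mult_mono) (auto simp: cplx_norm_nonneg)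
  finally have PH: "cplx_norm (P * cplx_cnj H) \<le> 2 * (cmod \<mu> * M) ^ N"
    by (simp add: power_mult_distrib mult_ac)
  have "cplx_norm (H * cplx_cnj H) \<le> cplx_norm H * cplx_norm H"
    using cplx_norm_mult[of H "cplx_cnj H"] by simp
  also have "\<dots> \<le> (2 * cmod \<mu> ^ N) * (2 * cmod \<mu> ^ N)"
    using H by (intro mult_mono) (auto simp: cplx_norm_nonneg)
  finally have HH: "cplx_norm (H * cplx_cnj H) \<le> 4 * ((cmod \<mu>)\<^sup>2) ^ N"
    by (simp add: power2_eq_square power_mult_distrib)
  have "pow_diff a w \<mu> N * cplx_cnj (pow_diff a w \<mu> N)
      = P * cplx_cnj P - H * cplx_cnj P - P * cplx_cnj H + H * cplx_cnj H"
    by (simp add: pow_diff_def P_def H_def cplx_cnj_diff algebra_simps)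
  then have "norm (pow_diff_sq a w \<mu> N)
      \<le> cplx_norm (P * cplx_cnj P - H * cplx_cnj P - P * cplx_cnj H + H * cplx_cnj H)"
    unfolding pow_diff_sq_def by (metis norm_cre_le_cplx_norm)
  also have "\<dots> \<le> cplx_norm (P * cplx_cnj P) + cplx_norm (H * cplx_cnj P)
      + cplx_norm (P * cplx_cnj H) + cplx_norm (H * cplx_cnj H)"
    by (meson cplx_norm_add cplx_norm_diff add_mono order_trans order_refl)
  finally show ?thesis using PP HP PH HH by linarith
qed

lemma norm_conj_quadratic_near_min:
  fixes a :: "'k::real_normed_field"
  assumes min: "\<And>z. norm (conj_quadratic a w) \<le> norm (conj_quadratic a z)"
    and r: "r = norm (conj_quadratic a w)" "r > 0"
    and M: "cplx_norm (Cplx a 0 - cplx_of w) \<le> M"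
    and t: "cmod \<mu> * M \<le> t * r" "(cmod \<mu>)\<^sup>2 \<le> t * r"
  shows "norm (conj_quadratic a (w + \<mu>)) \<le> r + 8 * r * t ^ (2 ^ m)"
proof -
  define N :: nat where "N = 2 ^ m"
  have "M \<ge> 0" using M cplx_norm_nonneg order_trans by blast
  have rN: "r ^ N = r * r ^ (N - 1)"
    using power_minus_mult[of N r] by (simp add: N_def mult.commute)
  have "(cmod \<mu> * M) ^ N \<le> (t * r) ^ N" "((cmod \<mu>)\<^sup>2) ^ N \<le> (t * r) ^ N"
    using t \<open>M \<ge> 0\<close> by (auto intro!: power_mono)
  then have "r ^ N + 4 * (cmod \<mu> * M) ^ N + 4 * ((cmod \<mu>)\<^sup>2) ^ N
      \<le> (r + 8 * r * t ^ N) * r ^ (N - 1)"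
    by (simp add: rN power_mult_distrib algebra_simps)
  moreover have "norm (conj_quadratic a (w + \<mu>)) * r ^ (N - 1)
      \<le> r ^ N + 4 * (cmod \<mu> * M) ^ N + 4 * ((cmod \<mu>)\<^sup>2) ^ N"
    using norm_pow_diff_sq_lower[of r a w \<mu> m] norm_pow_diff_sq_upper[OF M, of \<mu> N] min r
    by (simp add: N_def)
  ultimately have "norm (conj_quadratic a (w + \<mu>)) * r ^ (N - 1)
      \<le> (r + 8 * r * t ^ N) * r ^ (N - 1)" by (rule order_trans[rotated])
  then show ?thesis using \<open>r > 0\<close> by (simp add: N_def)
qed

lemma conj_quadratic_min_locally_constant:
  fixes a :: "'k::real_normed_field"
  assumes min: "\<And>z. norm (conj_quadratic a w) \<le> norm (conj_quadratic a z)"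
    and nz: "conj_quadratic a w \<noteq> 0"
  shows "\<exists>e>0. \<forall>z. dist z w < e \<longrightarrow> norm (conj_quadratic a z) = norm (conj_quadratic a w)"
proof -
  define r where "r = norm (conj_quadratic a w)"
  define M where "M = cplx_norm (Cplx a 0 - cplx_of w) + 1"
  have "r > 0" "M > 0"
    using nz cplx_norm_nonneg[of "Cplx a 0 - cplx_of w"] by (auto simp: r_def M_def)
  define e where "e = min (sqrt r) (r / M)"
  have le: "norm (conj_quadratic a (w + \<mu>)) \<le> r" if "cmod \<mu> < e" for \<mu>
  proof -
    define t where "t = max (cmod \<mu> * M / r) ((cmod \<mu>)\<^sup>2 / r)"
    have "cmod \<mu> * M < r" using that \<open>M > 0\<close> by (simp add: e_def pos_less_divide_eq)
    moreover have "(cmod \<mu>)\<^sup>2 < (sqrt r)\<^sup>2"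
      using that by (intro power_strict_mono) (auto simp: e_def)
    ultimately have t: "0 \<le> t" "t < 1"
      using \<open>r > 0\<close> \<open>M > 0\<close> by (auto simp: t_def le_max_iff_disj)
    have "cmod \<mu> * M / r \<le> t" "(cmod \<mu>)\<^sup>2 / r \<le> t" by (simp_all add: t_def)
    then have "cmod \<mu> * M \<le> t * r" "(cmod \<mu>)\<^sup>2 \<le> t * r"
      using \<open>r > 0\<close> by (simp_all add: pos_divide_le_eq)
    then have bound: "norm (conj_quadratic a (w + \<mu>)) \<le> r + 8 * r * t ^ (2 ^ m)" for m
      using norm_conj_quadratic_near_min[OF min r_def \<open>r > 0\<close>, of M] by (simp add: M_def)
    have "(\<lambda>m. t ^ (2 ^ m)) \<longlonglongrightarrow> 0"
      using LIMSEQ_subseq_LIMSEQ[OF LIMSEQ_power_zero[of t] strict_monoI[of "\<lambda>m::nat. (2::nat) ^ m"]] t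
      by (simp add: o_def)
    then have "(\<lambda>m. r + 8 * r * t ^ (2 ^ m)) \<longlonglongrightarrow> r + 8 * r * 0"
      by (intro tendsto_intros)
    then show ?thesis using bound by (simp add: LIMSEQ_le_const)
  qed
  have "e > 0" using \<open>r > 0\<close> \<open>M > 0\<close> by (simp add: e_def)
  show ?thesis
  proof (intro exI[of _ e] conjI allI impI)
    fix z assume "dist z w < e"
    then have "norm (conj_quadratic a (w + (z - w))) \<le> r"
      by (intro le) (simp add: dist_norm)
    then show "norm (conj_quadratic a z) = norm (conj_quadratic a w)"
      using min[of z] by (simp add: r_def)
  qed (rule \<open>e > 0\<close>)
qed

lemma continuous_on_norm_conj_quadratic: "continuous_on UNIV (\<lambda>z. norm (conj_quadratic a z))"
  unfolding conj_quadratic_def by (intro continuous_intros)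

lemma norm_conj_quadratic_lower:
  "norm (conj_quadratic a z) \<ge> (cmod z)\<^sup>2 - 2 * cmod z * norm a - (norm a)\<^sup>2"
proof -
  have "(cmod z)\<^sup>2 = norm (of_real ((Re z)\<^sup>2 + (Im z)\<^sup>2) :: 'a)"
    by (subst norm_of_real) (simp add: cmod_power2)
  also have "\<dots> = norm (conj_quadratic a z - a * a + of_real (2 * Re z) * a)"
    by (simp add: conj_quadratic_def)
  also have "\<dots> \<le> norm (conj_quadratic a z) + norm (a * a) + norm (of_real (2 * Re z) * a)"
    by (meson norm_triangle_ineq norm_triangle_ineq4 order_trans add_mono order_refl)
  also have "\<dots> \<le> norm (conj_quadratic a z) + (norm a)\<^sup>2 + 2 * cmod z * norm a"
    using abs_Re_le_cmod[of z] by (simp add: norm_mult power2_eq_square mult_right_mono)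
  finally show ?thesis by simp
qed

lemma norm_conj_quadratic_coercive:
  "\<exists>R>0. \<forall>z. R < cmod z \<longrightarrow> norm (conj_quadratic a 0) < norm (conj_quadratic a z)"
proof (intro exI conjI allI impI)
  define A G where "A = norm a" and "G = norm (conj_quadratic a 0)"
  show "3 * A + G + 1 > 0"
    using norm_ge_zero[of a] norm_ge_zero[of "conj_quadratic a 0"] unfolding A_def G_def by linarith
  fix z assume far: "3 * A + G + 1 < cmod z"
  have "A \<ge> 0" "G \<ge> 0" by (simp_all add: A_def G_def)
  have "(2 * A + G + 1)\<^sup>2 < (cmod z - A)\<^sup>2"
    using far \<open>A \<ge> 0\<close> \<open>G \<ge> 0\<close> by (intro power_strict_mono) auto
  moreover have "2 * A\<^sup>2 + G \<le> (2 * A + G + 1)\<^sup>2"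
    using \<open>A \<ge> 0\<close> \<open>G \<ge> 0\<close> by (simp add: power2_eq_square algebra_simps)
  ultimately have "G < (cmod z)\<^sup>2 - 2 * cmod z * A - A\<^sup>2"
    by (simp add: power2_eq_square algebra_simps)
  then show "G < norm (conj_quadratic a z)"
    using norm_conj_quadratic_lower[of z a] by (simp add: A_def)
qed

lemma norm_conj_quadratic_attains_min:
  "\<exists>w. \<forall>z. norm (conj_quadratic a w) \<le> norm (conj_quadratic a z)"
proof -
  obtain R where "R > 0" and far: "\<And>z. R < cmod z \<Longrightarrow> norm (conj_quadratic a 0) < norm (conj_quadratic a z)"
    using norm_conj_quadratic_coercive by blast
  have "\<exists>w\<in>cball 0 R. \<forall>z\<in>cball 0 R. norm (conj_quadratic a w) \<le> norm (conj_quadratic a z)"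
    using \<open>R > 0\<close> continuous_on_subset[OF continuous_on_norm_conj_quadratic]
    by (intro continuous_attains_inf compact_cball) auto
  then obtain w where w: "\<And>z. z \<in> cball 0 R \<Longrightarrow> norm (conj_quadratic a w) \<le> norm (conj_quadratic a z)"
    by blast
  have "norm (conj_quadratic a w) \<le> norm (conj_quadratic a z)" for z
    using w[of z] w[of 0] far[of z] \<open>R > 0\<close> by (cases "cmod z \<le> R") auto
  then show ?thesis by blast
qed

theorem conj_quadratic_has_root: "\<exists>z. conj_quadratic a z = 0"
proof (rule ccontr)
  assume no_root: "\<nexists>z. conj_quadratic a z = 0"
  define g where "g = (\<lambda>z. norm (conj_quadratic a z))"
  obtain w where w: "\<And>z. g w \<le> g z"
    using norm_conj_quadratic_attains_min unfolding g_def by blast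
  define E where "E = {z. g z = g w}"
  have "closed E"
    unfolding E_def g_def by (intro closed_Collect_eq continuous_on_norm_conj_quadratic continuous_on_const)
  moreover have "open E"
    unfolding open_dist
  proof (intro ballI)
    fix z assume "z \<in> E"
    then have "\<And>y. g z \<le> g y" using w by (simp add: E_def)
    then show "\<exists>e>0. \<forall>y. dist y z < e \<longrightarrow> y \<in> E"
      using conj_quadratic_min_locally_constant[of a z] no_root \<open>z \<in> E\<close>
      by (simp add: g_def E_def)
  qed
  moreover have "w \<in> E" by (simp add: E_def)
  ultimately have "E = UNIV" using clopen by blast
  moreover obtain R where "R > 0" "\<And>z. R < cmod z \<Longrightarrow> g 0 < g z"
    using norm_conj_quadratic_coercive unfolding g_def by blast
  ultimately have "g 0 < g (of_real (R + 1))" "g (of_real (R + 1)) = g w"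
    by (auto simp: E_def)
  then show False using w[of 0] by simp
qed

lemma conj_quadratic_eq_0_iff:
  "conj_quadratic b z = 0 \<longleftrightarrow> (b - of_real (Re z))\<^sup>2 = - (of_real (Im z))\<^sup>2"
  by (auto simp: conj_quadratic_def algebra_simps power2_eq_square)

lemma real_normed_field_of_real_if_no_sqrt_minus_one:
  fixes b :: "'k::real_normed_field"
  assumes "\<nexists>j::'k. j * j = -1"
  shows "\<exists>s. b = of_real s"
proof -
  obtain z where z: "(b - of_real (Re z))\<^sup>2 = - (of_real (Im z))\<^sup>2"
    using conj_quadratic_has_root[of b] conj_quadratic_eq_0_iff by blast
  have "Im z = 0"
  proof (rule ccontr)
    assume "Im z \<noteq> 0"
    then have "((b - of_real (Re z)) / of_real (Im z)) * ((b - of_real (Re z)) / of_real (Im z)) = -1"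
      using z by (simp add: field_simps power2_eq_square)
    with assms show False by blast
  qed
  with z show ?thesis by auto
qed

lemma sqrt_minus_one_span:
  fixes b j :: "'k::real_normed_field"
  assumes j: "j * j = -1"
  shows "\<exists>s t. b = of_real s + of_real t * j"
proof -
  obtain z where z: "(b - of_real (Re z))\<^sup>2 = - (of_real (Im z))\<^sup>2"
    using conj_quadratic_has_root[of b] conj_quadratic_eq_0_iff by blast
  define x y where "x = (of_real (Re z) :: 'k)" and "y = (of_real (Im z) :: 'k)"
  have "(b - (x + y * j)) * (b - (x - y * j)) = (b - x)\<^sup>2 - y\<^sup>2 * (j * j)"
    by (simp add: algebra_simps power2_eq_square)
  also have "\<dots> = 0" using z j by (simp add: x_def y_def)
  finally have "b = x + y * j \<or> b = x + (- y) * j" by auto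
  then show ?thesis unfolding x_def y_def by (metis of_real_minus)
qed

lemma norm_of_real_plus_sqrt_minus_one_lower:
  fixes j :: "'k::real_normed_field"
  assumes j: "j * j = -1"
  shows "\<bar>s\<bar> + \<bar>t\<bar> \<le> 2 * (1 + norm j) * norm (of_real s + of_real t * j :: 'k)"
proof -
  define x :: 'k where "x = of_real s + of_real t * j"
  define x' :: 'k where "x' = of_real s - of_real t * j"
  have "x * x' = of_real s * of_real s - of_real t * of_real t * (j * j)"
    by (simp add: x_def x'_def algebra_simps)
  also have "\<dots> = of_real (s * s + t * t)"
    using j by simp
  finally have "x * x' = of_real (s * s + t * t)" .
  then have "norm x * norm x' = norm (of_real (s * s + t * t) :: 'k)"
    by (simp only: norm_mult[symmetric])
  then have prod: "norm x * norm x' = s * s + t * t"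
    by (simp only: norm_of_real) simp
  have "norm x' \<le> \<bar>s\<bar> + \<bar>t\<bar> * norm j"
    using norm_triangle_ineq4[of "of_real s :: 'k" "of_real t * j"] by (simp add: x'_def norm_mult)
  also have "\<dots> \<le> (1 + norm j) * (\<bar>s\<bar> + \<bar>t\<bar>)"
    by (simp add: algebra_simps)
  finally have "norm x * norm x' \<le> norm x * ((1 + norm j) * (\<bar>s\<bar> + \<bar>t\<bar>))"
    by (simp add: mult_left_mono)
  moreover have "(\<bar>s\<bar> + \<bar>t\<bar>) * (\<bar>s\<bar> + \<bar>t\<bar>) \<le> 2 * (s * s + t * t)"
    using zero_le_square[of "\<bar>s\<bar> - \<bar>t\<bar>"] by (simp add: algebra_simps abs_mult_self_eq)
  ultimately have "(\<bar>s\<bar> + \<bar>t\<bar>) * (\<bar>s\<bar> + \<bar>t\<bar>) \<le> 2 * (norm x * ((1 + norm j) * (\<bar>s\<bar> + \<bar>t\<bar>)))"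
    unfolding prod by (smt (verit))
  also have "\<dots> = (2 * (1 + norm j) * norm x) * (\<bar>s\<bar> + \<bar>t\<bar>)"
    by (simp only: mult_ac)
  finally have key: "(\<bar>s\<bar> + \<bar>t\<bar>) * (\<bar>s\<bar> + \<bar>t\<bar>) \<le> (2 * (1 + norm j) * norm x) * (\<bar>s\<bar> + \<bar>t\<bar>)" .
  show ?thesis
  proof (cases "\<bar>s\<bar> + \<bar>t\<bar> > 0")
    case True
    with key show ?thesis unfolding x_def by (simp add: mult_le_cancel_right)
  next
    case False
    then have "s = 0" "t = 0" by auto
    then show ?thesis by simp
  qed
qed

text \<open>A real normed field is \<open>\<real>\<close> (take \<open>j = 0\<close>) or \<open>\<complex>\<close>, with coordinates bounded by the norm.\<close>

lemma real_normed_field_coordinates: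
  "\<exists>(j::'k::real_normed_field) C. \<forall>b. \<exists>s t. b = of_real s + of_real t * j \<and> \<bar>s\<bar> + \<bar>t\<bar> \<le> C * norm b"
proof (cases "\<exists>j::'k. j * j = -1")
  case True
  then obtain j :: 'k where j: "j * j = -1" by blast
  show ?thesis
    using sqrt_minus_one_span[OF j] norm_of_real_plus_sqrt_minus_one_lower[OF j] by metis
next
  case False
  have "\<exists>s t. b = of_real s + of_real t * 0 \<and> \<bar>s\<bar> + \<bar>t\<bar> \<le> 1 * norm b" for b :: 'k
    using real_normed_field_of_real_if_no_sqrt_minus_one[OF False, of b] by auto
  then show ?thesis by blast
qed

lemma real_normed_field_bounded_imp_convergent_subsequence:
  fixes f :: "nat \<Rightarrow> 'k::real_normed_field"
  assumes "\<And>n. norm (f n) \<le> B"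
  shows "\<exists>l r. strict_mono r \<and> (f \<circ> r) \<longlonglongrightarrow> l"
proof -
  obtain j :: 'k and C where "\<forall>b. \<exists>s t. b = of_real s + of_real t * j \<and> \<bar>s\<bar> + \<bar>t\<bar> \<le> C * norm b"
    using real_normed_field_coordinates by blast
  then have "\<forall>n. \<exists>s t. f n = of_real s + of_real t * j \<and> \<bar>s\<bar> + \<bar>t\<bar> \<le> C * norm (f n)"
    by blast
  then obtain s where "\<forall>n. \<exists>t. f n = of_real (s n) + of_real t * j \<and> \<bar>s n\<bar> + \<bar>t\<bar> \<le> C * norm (f n)"
    by (rule choice[THEN exE])
  then obtain t where "\<forall>n. f n = of_real (s n) + of_real (t n) * j \<and> \<bar>s n\<bar> + \<bar>t n\<bar> \<le> C * norm (f n)"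
    by (rule choice[THEN exE])
  then have st: "\<And>n. f n = of_real (s n) + of_real (t n) * j"
    and le: "\<And>n. \<bar>s n\<bar> + \<bar>t n\<bar> \<le> C * norm (f n)"
    by blast+
  have "norm (s n, t n) \<le> \<bar>C\<bar> * B" for n
  proof -
    have "norm (s n, t n) \<le> \<bar>s n\<bar> + \<bar>t n\<bar>"
      by (simp add: norm_Pair sqrt_sum_squares_le_sum_abs)
    also have "\<dots> \<le> \<bar>C\<bar> * norm (f n)"
      using le[of n] abs_ge_self[of C] by (smt (verit) mult_right_mono norm_ge_zero)
    also have "\<dots> \<le> \<bar>C\<bar> * B"
      using assms by (simp add: mult_left_mono)
    finally show ?thesis .
  qed
  then have "bounded (range (\<lambda>n. (s n, t n)))"
    unfolding bounded_iff by blast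
  then obtain l r where r: "strict_mono r" "((\<lambda>n. (s n, t n)) \<circ> r) \<longlonglongrightarrow> l"
    by (blast dest: bounded_imp_convergent_subsequence)
  then have "(\<lambda>n. s (r n)) \<longlonglongrightarrow> fst l" "(\<lambda>n. t (r n)) \<longlonglongrightarrow> snd l"
    using tendsto_fst[OF r(2)] tendsto_snd[OF r(2)] by (simp_all add: o_def)
  then have "(f \<circ> r) \<longlonglongrightarrow> of_real (fst l) + of_real (snd l) * j"
    unfolding o_def st by (intro tendsto_intros)
  with r(1) show ?thesis by blast
qed

lemma real_normed_field_bounded_pair_convergent_subsequence:
  fixes f g :: "nat \<Rightarrow> 'k::real_normed_field"
  assumes "\<And>n. norm (f n) \<le> B" "\<And>n. norm (g n) \<le> B"
  shows "\<exists>r l m. strict_mono r \<and> (f \<circ> r) \<longlonglongrightarrow> l \<and> (g \<circ> r) \<longlonglongrightarrow> m"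
proof -
  obtain l r1 where r1: "strict_mono r1" "(f \<circ> r1) \<longlonglongrightarrow> l"
    using real_normed_field_bounded_imp_convergent_subsequence assms(1) by blast
  obtain m r2 where r2: "strict_mono r2" "(g \<circ> r1 \<circ> r2) \<longlonglongrightarrow> m"
    using real_normed_field_bounded_imp_convergent_subsequence[of "g \<circ> r1" B] assms(2) by auto
  have "(f \<circ> (r1 \<circ> r2)) \<longlonglongrightarrow> l"
    using LIMSEQ_subseq_LIMSEQ[OF r1(2) r2(1)] by (simp add: o_assoc)
  moreover have "(g \<circ> (r1 \<circ> r2)) \<longlonglongrightarrow> m"
    using r2(2) by (simp add: o_assoc)
  ultimately show ?thesis
    using strict_mono_o[OF r1(1) r2(1)] by blast
qed

lemma norm_rescaled_pair_sum_eq_1: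
  fixes c :: "'k::real_normed_field"
  defines "d \<equiv> of_real (1 / (1 + norm c)) :: 'k"
  shows "norm (d * c) + norm d = 1"
proof -
  have "1 + norm c > 0" by (simp add: add_pos_nonneg)
  then show ?thesis
    by (simp only: d_def norm_mult norm_of_real) (simp add: field_simps)
qed

section \<open>Finite-dimensional subspaces of an F-space are closed\<close>

lemma (in vector_space) mem_subspace_plus_line:
  assumes W: "subspace W" and "x \<notin> W" and "scale d y - scale c x \<in> W" and "c \<noteq> 0 \<or> d \<noteq> 0"
  shows "\<exists>w k. w \<in> W \<and> y = w + scale k x"
proof (cases "d = 0")
  case True
  then have "scale (- inverse c) (scale d y - scale c x) = x"
    using assms(4) by simp
  then have "x \<in> W" using subspace_scale[OF W assms(3)] by metis
  with \<open>x \<notin> W\<close> show ?thesis by blast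
next
  case False
  then have "scale (inverse d) (scale d y - scale c x) = y - scale (inverse d * c) x"
    by (simp add: scale_right_diff_distrib)
  then have "y - scale (inverse d * c) x \<in> W" using subspace_scale[OF W assms(3)] by metis
  then show ?thesis by (metis diff_add_cancel)
qed

locale fspace =
  fixes scale :: "'k::real_normed_field \<Rightarrow> 'a::{ab_group_add,topological_space} \<Rightarrow> 'a"
  assumes F_space: "F_space scale"
begin

sublocale vs: vector_space scale
  using F_space by (simp add: F_space_def)

lemma continuous_on_vector_add: "continuous_on UNIV (\<lambda>(x::'a, y). x + y)"
  using F_space by (simp add: F_space_def)

lemma continuous_on_vector_scale: "continuous_on UNIV (\<lambda>(c, x). scale c x)"
  using F_space by (simp add: F_space_def)

lemma tendsto_vector_add:
  assumes "(f \<longlongrightarrow> a) F" "(g \<longlongrightarrow> b) F"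
  shows "((\<lambda>i. f i + g i :: 'a) \<longlongrightarrow> a + b) F"
  using continuous_on_tendsto_compose[OF continuous_on_vector_add tendsto_Pair[OF assms]] by simp

lemma tendsto_vector_scale:
  assumes "(c \<longlongrightarrow> c0) F" "(f \<longlongrightarrow> a) F"
  shows "((\<lambda>i. scale (c i) (f i)) \<longlongrightarrow> scale c0 a) F"
  using continuous_on_tendsto_compose[OF continuous_on_vector_scale tendsto_Pair[OF assms]] by simp

lemma tendsto_vector_diff:
  assumes "(f \<longlongrightarrow> a) F" "(g \<longlongrightarrow> b) F"
  shows "((\<lambda>i. f i - g i :: 'a) \<longlongrightarrow> a - b) F"
  using tendsto_vector_add[OF assms(1) tendsto_vector_scale[OF tendsto_const assms(2), of "- 1"]] by simp

lemma metrizable: "metrizable_space (euclidean :: 'a topology)"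
proof -
  have "completely_metrizable_space (euclidean :: 'a topology)"
    using F_space by (simp add: F_space_def)
  then show ?thesis by (rule completely_metrizable_imp_metrizable_space)
qed

lemma closed_singleton_zero: "closed {0::'a}"
proof -
  have "closedin euclidean {0::'a}"
    by (rule closedin_Hausdorff_singleton[OF metrizable_imp_Hausdorff_space[OF metrizable]]) simp
  then show ?thesis by (simp only: closed_closedin)
qed

lemma closure_imp_convergent_sequence:
  assumes "y \<in> closure S"
  shows "\<exists>\<sigma>. (\<forall>n. \<sigma> n \<in> S) \<and> \<sigma> \<longlonglongrightarrow> (y::'a)"
proof -
  obtain M d where Md: "Metric_space M d" "(euclidean :: 'a topology) = Metric_space.mtopology M d"
    using metrizable unfolding metrizable_space_def by blast
  have "y \<in> Metric_space.mtopology M d closure_of S"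
    using assms unfolding Md(2)[symmetric] by simp
  then obtain \<sigma> where "range \<sigma> \<subseteq> S \<inter> M" "limitin (Metric_space.mtopology M d) \<sigma> y sequentially"
    using Metric_space.closure_of_sequentially[OF Md(1)] by blast
  then show ?thesis unfolding Md(2)[symmetric] by auto
qed

lemma limit_in_subspace_plus_line:
  assumes cW: "closed W" and W: "vs.subspace W" and w: "\<And>n. w n \<in> W"
    and lim: "(\<lambda>n. w n + scale (c n) x) \<longlonglongrightarrow> y"
  shows "\<exists>\<gamma> \<delta>. (\<gamma> \<noteq> 0 \<or> \<delta> \<noteq> 0) \<and> scale \<delta> y - scale \<gamma> x \<in> W"
proof -
  \<comment> \<open>rescale \<open>(1, c\<^sub>n)\<close> to norm sum 1, so that a subsequence converges to a nonzero pair\<close>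
  define d :: "nat \<Rightarrow> 'k" where "d n = of_real (1 / (1 + norm (c n)))" for n
  have sum1: "norm (d n * c n) + norm (d n) = 1" for n
    unfolding d_def by (rule norm_rescaled_pair_sum_eq_1)
  then have "norm (d n * c n) \<le> 1" "norm (d n) \<le> 1" for n
    using norm_ge_zero[of "d n"] norm_ge_zero[of "d n * c n"] by (smt (verit))+
  then obtain r \<gamma> \<delta> where r: "strict_mono r" "((\<lambda>n. d n * c n) \<circ> r) \<longlonglongrightarrow> \<gamma>" "(d \<circ> r) \<longlonglongrightarrow> \<delta>"
    using real_normed_field_bounded_pair_convergent_subsequence[of "\<lambda>n. d n * c n" 1 d] by blast
  have "norm \<gamma> + norm \<delta> = 1"
    using tendsto_unique[OF _ tendsto_add[OF tendsto_norm[OF r(2)] tendsto_norm[OF r(3)]]] sum1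
    by (simp add: o_def)
  then have "\<gamma> \<noteq> 0 \<or> \<delta> \<noteq> 0" by auto
  have "scale (d n) (w n) = scale (d n) (w n + scale (c n) x) - scale (d n * c n) x" for n
    by (simp add: vs.scale_right_distrib)
  moreover have "(\<lambda>n. scale (d (r n)) (w (r n) + scale (c (r n)) x) - scale (d (r n) * c (r n)) x)
      \<longlonglongrightarrow> scale \<delta> y - scale \<gamma> x"
    using r LIMSEQ_subseq_LIMSEQ[OF lim r(1)]
    by (intro tendsto_vector_diff tendsto_vector_scale tendsto_const) (simp_all add: o_def)
  ultimately have lim': "(\<lambda>n. scale (d (r n)) (w (r n))) \<longlonglongrightarrow> scale \<delta> y - scale \<gamma> x"
    by simp
  have "\<forall>n. scale (d (r n)) (w (r n)) \<in> W"
    using W w by (simp add: vs.subspace_scale)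
  then have "scale \<delta> y - scale \<gamma> x \<in> W"
    using Lim_in_closed_set[OF cW always_eventually _ lim'] by simp
  with \<open>\<gamma> \<noteq> 0 \<or> \<delta> \<noteq> 0\<close> show ?thesis by blast
qed

lemma closed_subspace_plus_line:
  assumes cW: "closed W" and W: "vs.subspace W" and "x \<notin> W"
  shows "closed {w + scale c x | w c. w \<in> W}" (is "closed ?V")
proof -
  have "y \<in> ?V" if y: "y \<in> closure ?V" for y
  proof -
    obtain \<sigma> where \<sigma>: "\<And>n. \<sigma> n \<in> ?V" "\<sigma> \<longlonglongrightarrow> y"
      using closure_imp_convergent_sequence[OF y] by blast
    then have "\<forall>n. \<exists>w c. w \<in> W \<and> \<sigma> n = w + scale c x"
      by blast
    then obtain w where "\<forall>n. \<exists>c. w n \<in> W \<and> \<sigma> n = w n + scale c x"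
      by (rule choice[THEN exE])
    then obtain c where "\<forall>n. w n \<in> W \<and> \<sigma> n = w n + scale (c n) x"
      by (rule choice[THEN exE])
    then have w: "\<And>n. w n \<in> W" and \<sigma>_eq: "\<sigma> = (\<lambda>n. w n + scale (c n) x)"
      by auto
    obtain \<gamma> \<delta> where "\<gamma> \<noteq> 0 \<or> \<delta> \<noteq> 0" "scale \<delta> y - scale \<gamma> x \<in> W"
      using limit_in_subspace_plus_line[OF cW W w \<sigma>(2)[unfolded \<sigma>_eq]] by blast
    then show ?thesis
      using vs.mem_subspace_plus_line[OF W \<open>x \<notin> W\<close>] by blast
  qed
  then have "closure ?V \<subseteq> ?V" by blast
  then show ?thesis by (simp only: closure_subset_eq)
qed

lemma closed_span:
  assumes "finite B"
  shows "closed (vs.span B)"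
  using assms
proof (induction B rule: finite_induct)
  case empty
  then show ?case using closed_singleton_zero by simp
next
  case (insert b B)
  show ?case
  proof (cases "b \<in> vs.span B")
    case True
    then show ?thesis using insert.IH by (simp add: vs.span_redundant)
  next
    case False
    have "(\<exists>k. y - scale k b \<in> vs.span B) \<longleftrightarrow> (\<exists>w c. y = w + scale c b \<and> w \<in> vs.span B)" for y
      by (metis add_diff_cancel diff_add_cancel)
    then have "vs.span (insert b B) = {w + scale c b | w c. w \<in> vs.span B}"
      unfolding vs.span_insert by blast
    then show ?thesis
      using closed_subspace_plus_line[OF insert.IH vs.subspace_span False] by simp
  qed
qed

end

section \<open>Rigid vectors\<close>

definition rigid_vectors :: "('a::topological_space \<Rightarrow> 'a) \<Rightarrow> (nat \<Rightarrow> nat) \<Rightarrow> 'a set" where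
  "rigid_vectors T n = {x. (\<lambda>k. (T ^^ n k) x) \<longlonglongrightarrow> x}"

lemma rigid_vectors_subset_Rec:
  assumes "\<And>k. n k \<ge> 1"
  shows "rigid_vectors T n \<subseteq> Rec T"
proof
  fix x assume "x \<in> rigid_vectors T n"
  then have lim: "(\<lambda>k. (T ^^ n k) x) \<longlonglongrightarrow> x" by (simp add: rigid_vectors_def)
  have "(T ^^ n k) x \<in> {(T ^^ m) x | m. m \<ge> 1}" for k
    using assms[of k] by blast
  then have "\<forall>k. (T ^^ n k) x \<in> closure {(T ^^ m) x | m. m \<ge> 1}"
    using closure_subset[of "{(T ^^ m) x | m. m \<ge> 1}"] by blast
  then have "x \<in> closure {(T ^^ m) x | m. m \<ge> 1}"
    using Lim_in_closed_set[OF closed_closure always_eventually _ lim] by simp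
  then show "x \<in> Rec T" by (simp add: Rec_def)
qed

context fspace
begin

sublocale vs_pair: vector_space_pair scale scale ..

lemma linear_funpow:
  assumes "Vector_Spaces.linear scale scale T"
  shows "Vector_Spaces.linear scale scale (T ^^ m)"
proof (induction m)
  case 0
  show ?case by (simp add: vs.linear_ident)
next
  case (Suc m)
  show ?case using Vector_Spaces.linear_compose[OF Suc.IH assms] by (simp add: o_def)
qed

lemma subspace_rigid_vectors:
  assumes T: "Vector_Spaces.linear scale scale T"
  shows "vs.subspace (rigid_vectors T n)"
  unfolding vs.subspace_def rigid_vectors_def
  using vs_pair.linear_0[OF linear_funpow[OF T]] vs_pair.linear_add[OF linear_funpow[OF T]]
    vs_pair.linear_scale[OF linear_funpow[OF T]]
  by (auto intro!: tendsto_vector_add tendsto_vector_scale)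

lemma dense_finite_span_eq_UNIV:
  assumes "finite B" and "closure (vs.span B) = UNIV"
  shows "vs.span B = UNIV"
  using assms closed_span closure_closed by metis

end

theorem mainTheorem4:
  fixes smult_op :: "'k::real_normed_field \<Rightarrow> 'a::{ab_group_add,topological_space} \<Rightarrow> 'a"
    and T :: "'a \<Rightarrow> 'a"
  assumes "F_space smult_op"
    and "separable_space (euclidean :: 'a topology)"
    and "\<not> (\<exists>B. finite B \<and> module.span smult_op B = UNIV)"
    and "Vector_Spaces.linear smult_op smult_op T"
    and "continuous_on UNIV T"
    and "quasi_rigid T"
  shows "\<exists>V. module.subspace smult_op V \<and> closure V = UNIV \<and>
             \<not> (\<exists>B. finite B \<and> module.span smult_op B = V) \<and> V \<subseteq> Rec T"
proof -
  interpret fspace smult_op by (rule fspace.intro) (rule assms(1))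
  obtain n Y where n: "\<And>k. n k \<ge> 1" and "closure Y = UNIV"
    and "\<forall>x\<in>Y. (\<lambda>k. (T ^^ n k) x) \<longlonglongrightarrow> x"
    using assms(6) unfolding quasi_rigid_def by blast
  then have "Y \<subseteq> rigid_vectors T n" by (auto simp: rigid_vectors_def)
  then have dense: "closure (rigid_vectors T n) = UNIV"
    using closure_mono \<open>closure Y = UNIV\<close> by blast
  show ?thesis
  proof (intro exI conjI)
    show "vs.subspace (rigid_vectors T n)" using subspace_rigid_vectors[OF assms(4)] .
    show "closure (rigid_vectors T n) = UNIV" by (rule dense)
    show "\<not> (\<exists>B. finite B \<and> vs.span B = rigid_vectors T n)"
      using dense_finite_span_eq_UNIV dense assms(3) by metis
    show "rigid_vectors T n \<subseteq> Rec T" using rigid_vectors_subset_Rec n .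
  qed
qed

end
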